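(* Let $h\in\widehat{\operatorname{IET}^{\bowtie}}$. Then there exist $f,g\in\widehat{\operatorname{IET}^{+}_{\mathrm{rc}}}$, finite products of flips $r,s$, and finitely supported permutations $\sigma,\tau$ of $[0,1[$ such that $h=r\sigma f=g\tau s$.
   Context: $X=[0,1[$. $\widehat{\operatorname{IET}^{\bowtie}}$ is the group of bijections $f:X\to X$ for which there is a finite partition of $X$ into intervals $[a,b[$ such that on each open interval $]a,b[$, $f$ is of the form $x\mapsto x+c$ or $x\mapsto -x+c$. $\widehat{\operatorname{IET}^{+}}$ is the subgroup of those for which only the form $x\mapsto x+c$ occurs, and $\widehat{\operatorname{IET}^{+}_{\mathrm{rc}}}$ is the subgroup of right-continuous elements of $\widehat{\operatorname{IET}^{+}}$. For a nonempty interval $I=[a,b[\subseteq X$, the $I$-flip is the bijection of $X$ which maps $x\mapsto a+b-x$ on $]a,b[$ and fixes every other point of $X$ (including $a$); a flip is an $I$-flip for some such $I$. *)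

theory Defs
  imports "HOL-Analysis.Analysis"
begin

definition X :: "real set" where
  "X = {0..<1}"

definition perm_X :: "(real \<Rightarrow> real) \<Rightarrow> bool" where
  "perm_X f \<longleftrightarrow> bij_betw f X X \<and> (\<forall>x. x \<notin> X \<longrightarrow> f x = x)"

definition pw_isom :: "bool \<Rightarrow> (real \<Rightarrow> real) \<Rightarrow> bool" where
  "pw_isom allow_flip f \<longleftrightarrow>
     (\<exists>(n::nat) (t::nat \<Rightarrow> real). t 0 = 0 \<and> t n = 1 \<and> (\<forall>i<n. t i < t (Suc i)) \<and>
        (\<forall>i<n. \<exists>c. (\<forall>x. t i < x \<and> x < t (Suc i) \<longrightarrow> f x = x + c) \<or>
                   (allow_flip \<and> (\<forall>x. t i < x \<and> x < t (Suc i) \<longrightarrow> f x = - x + c))))"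

definition IET_hat_flip :: "(real \<Rightarrow> real) \<Rightarrow> bool" where
  "IET_hat_flip f \<longleftrightarrow> perm_X f \<and> pw_isom True f"

definition IET_hat_plus :: "(real \<Rightarrow> real) \<Rightarrow> bool" where
  "IET_hat_plus f \<longleftrightarrow> perm_X f \<and> pw_isom False f"

definition IET_hat_plus_rc :: "(real \<Rightarrow> real) \<Rightarrow> bool" where
  "IET_hat_plus_rc f \<longleftrightarrow> IET_hat_plus f \<and> (\<forall>x\<in>X. continuous (at_right x) f)"

definition flip :: "real \<Rightarrow> real \<Rightarrow> real \<Rightarrow> real" where
  "flip a b x = (if a < x \<and> x < b then a + b - x else x)"

inductive flip_product :: "(real \<Rightarrow> real) \<Rightarrow> bool" where
  fp_id: "flip_product id"
| fp_step: "flip_product r \<Longrightarrow> 0 \<le> a \<Longrightarrow> a < b \<Longrightarrow> b \<le> 1 \<Longrightarrow> flip_product (flip a b \<circ> r)"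

definition fin_supp_perm_X :: "(real \<Rightarrow> real) \<Rightarrow> bool" where
  "fin_supp_perm_X s \<longleftrightarrow> bij_betw s X X \<and> {x. s x \<noteq> x} \<subseteq> X \<and> finite {x. s x \<noteq> x}"

end

theory Submission
  imports Defs
begin

(* Let f translate each half-open piece [t i, t (Suc i)[ onto the interval spanned by its
   image, without reversing it. Then f is right-continuous, injective because the images of
   the open pieces are disjoint, and onto X because it agrees with a bijection of X except at
   the finitely many breakpoints. Precomposing h with the flips of the reversed pieces, or
   postcomposing it with the flips of their images, gives a map equal to f off the
   breakpoints, so the discrepancies are finitely supported permutations; flip products form
   a group, so the flips can be moved to the other side. *)

lemma perm_X_bij: "perm_X f \<Longrightarrow> bij f"
proof -
  assume f: "perm_X f"
  have "bij_betw f (- X) (- X)"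
    by (rule bij_betw_cong[THEN iffD2, of _ _ id]) (use f in \<open>auto simp: perm_X_def\<close>)
  then have "bij_betw f (X \<union> - X) (X \<union> - X)"
    using f unfolding perm_X_def by (intro bij_betw_combine) auto
  then show "bij f" by simp
qed

lemma perm_X_outside: "perm_X f \<Longrightarrow> x \<notin> X \<Longrightarrow> f x = x"
  unfolding perm_X_def by blast

lemma perm_X_comp: "perm_X f \<Longrightarrow> perm_X g \<Longrightarrow> perm_X (f \<circ> g)"
  using bij_betw_trans[of g X X f X] unfolding perm_X_def by simp

lemma perm_X_inv: "perm_X f \<Longrightarrow> perm_X (inv f)"
proof -
  assume f: "perm_X f"
  then have "bij f" by (rule perm_X_bij)
  then have "inv f ` X = X"
    using f image_inv_f_f[of f X] unfolding perm_X_def bij_betw_def by (simp add: bij_is_inj)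
  moreover have "inj_on (inv f) X"
    using bij_is_inj[OF bij_imp_bij_inv[OF \<open>bij f\<close>]] inj_on_subset by blast
  moreover have "inv f x = x" if "x \<notin> X" for x
  proof -
    have "f x = x" using f that unfolding perm_X_def by simp
    then show ?thesis using inv_f_f[OF bij_is_inj[OF \<open>bij f\<close>], of x] by simp
  qed
  ultimately show "perm_X (inv f)" unfolding perm_X_def bij_betw_def by blast
qed

lemma fin_supp_perm_XI: "perm_X s \<Longrightarrow> finite {x. s x \<noteq> x} \<Longrightarrow> fin_supp_perm_X s"
  unfolding perm_X_def fin_supp_perm_X_def by blast

lemma flip_flip: "flip a b \<circ> flip a b = id"
  unfolding flip_def by auto

lemma inv_flip: "inv (flip a b) = flip a b"
  by (rule inv_unique_comp) (rule flip_flip)+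

lemma perm_X_flip:
  assumes "0 \<le> a" "b \<le> 1" shows "perm_X (flip a b)"
proof -
  have involution: "flip a b (flip a b x) = x" for x
    using flip_flip[of a b] by (simp add: fun_eq_iff)
  have "flip a b ` X \<subseteq> X" using assms unfolding flip_def X_def by auto
  then have "bij_betw (flip a b) X X"
    using involution by (intro bij_betw_byWitness[where f' = "flip a b"]) auto
  moreover have "x \<notin> X \<Longrightarrow> flip a b x = x" for x
    using assms unfolding flip_def X_def by auto
  ultimately show ?thesis unfolding perm_X_def by blast
qed

lemma flip_product_comp: "flip_product p \<Longrightarrow> flip_product q \<Longrightarrow> flip_product (p \<circ> q)"
  by (induction p rule: flip_product.induct) (auto simp: comp_assoc intro: flip_product.intros)

lemma flip_product_perm_X: "flip_product r \<Longrightarrow> perm_X r"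
proof (induction r rule: flip_product.induct)
  case fp_id
  show ?case by (simp add: perm_X_def bij_betw_def)
next
  case (fp_step r a b)
  then show ?case by (intro perm_X_comp perm_X_flip) auto
qed

lemma flip_product_inv: "flip_product r \<Longrightarrow> flip_product (inv r)"
proof (induction r rule: flip_product.induct)
  case fp_id
  show ?case by (simp only: inv_id) (rule flip_product.fp_id)
next
  case (fp_step r a b)
  have "bij (flip a b)" using flip_flip flip_flip by (rule o_bij)
  then have "inv (flip a b \<circ> r) = inv r \<circ> flip a b"
    using fp_step.hyps(1) by (simp add: o_inv_distrib perm_X_bij flip_product_perm_X inv_flip)
  moreover have "flip_product (flip a b)"
    using flip_product.fp_step[OF flip_product.fp_id] fp_step.hyps by simp
  ultimately show ?case using fp_step.IH flip_product_comp by metis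
qed

definition flip_list :: "'i list \<Rightarrow> ('i \<Rightarrow> real) \<Rightarrow> ('i \<Rightarrow> real) \<Rightarrow> real \<Rightarrow> real" where
  "flip_list L a b = foldr (\<lambda>i r. flip (a i) (b i) \<circ> r) L id"

lemma flip_list_Nil [simp]: "flip_list [] a b = id"
  and flip_list_Cons [simp]: "flip_list (i # L) a b = flip (a i) (b i) \<circ> flip_list L a b"
  by (simp_all add: flip_list_def)

lemma flip_product_flip_list:
  "(\<And>i. i \<in> set L \<Longrightarrow> 0 \<le> a i \<and> a i < b i \<and> b i \<le> 1) \<Longrightarrow> flip_product (flip_list L a b)"
  by (induction L) (auto intro: flip_product.intros)

lemma flip_list_apply:
  assumes "distinct L" "z \<in> {a i<..<b i}"
    and "\<And>j. j \<in> set L \<Longrightarrow> j \<noteq> i \<Longrightarrow> {a j<..<b j} \<inter> {a i<..<b i} = {}"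
  shows "flip_list L a b z = (if i \<in> set L then a i + b i - z else z)"
  using assms
proof (induction L)
  case (Cons j L)
  have IH: "flip_list L a b z = (if i \<in> set L then a i + b i - z else z)"
    by (rule Cons.IH) (use Cons.prems in auto)
  show ?case
  proof (cases "j = i")
    case True
    then show ?thesis using IH Cons.prems(1,2) by (simp add: flip_def)
  next
    case False
    have "flip_list L a b z \<in> {a i<..<b i}" using IH Cons.prems(2) by auto
    moreover have "{a j<..<b j} \<inter> {a i<..<b i} = {}" using Cons.prems(3) False by simp
    ultimately have "flip_list L a b z \<notin> {a j<..<b j}" by blast
    then have "flip (a j) (b j) (flip_list L a b z) = flip_list L a b z"
      by (auto simp: flip_def)
    with IH False show ?thesis by simp
  qed
qed simp

lemma disagreement_comp_inv:
  assumes "bij q" shows "{y. (p \<circ> inv q) y \<noteq> y} = q ` {x. p x \<noteq> q x}"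
proof (intro set_eqI iffI)
  fix y assume "y \<in> {y. (p \<circ> inv q) y \<noteq> y}"
  moreover have y: "q (inv q y) = y" using assms by (simp add: bij_is_surj surj_f_inv_f)
  ultimately have "inv q y \<in> {x. p x \<noteq> q x}" by simp
  then show "y \<in> q ` {x. p x \<noteq> q x}" using y by (metis image_eqI)
next
  fix y assume "y \<in> q ` {x. p x \<noteq> q x}"
  then obtain x where "y = q x" "p x \<noteq> q x" by blast
  moreover have "inv q (q x) = x" using assms by (simp add: bij_is_inj)
  ultimately show "y \<in> {y. (p \<circ> inv q) y \<noteq> y}" by simp
qed

lemma disagreement_inv_comp:
  assumes "bij q" shows "{x. (inv q \<circ> p) x \<noteq> x} = {x. p x \<noteq> q x}"
proof -
  have "inv q (p x) = x \<longleftrightarrow> p x = q x" for x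
    using bij_inv_eq_iff[OF assms, of x "p x"] by metis
  then show ?thesis by auto
qed

lemma Ico_disjoint_if_Ioo_disjoint:
  fixes a b c d :: real
  assumes "{a<..<b} \<inter> {c<..<d} = {}"
  shows "{a..<b} \<inter> {c..<d} = {}"
proof (rule ccontr)
  assume "{a..<b} \<inter> {c..<d} \<noteq> {}"
  then obtain x where "x \<in> {a..<b} \<inter> {c..<d}" by blast
  then have "(x + min b d) / 2 \<in> {a<..<b} \<inter> {c<..<d}" by (auto simp: min_def)
  with assms show False by blast
qed

lemma bij_betw_if_finite_modification:
  assumes g: "bij_betw g A A" and f_inj: "inj_on f A" and f_into: "f ` A \<subseteq> A"
    and B: "finite B" "B \<subseteq> A" and agree: "\<And>x. x \<in> A - B \<Longrightarrow> f x = g x"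
  shows "bij_betw f A A"
proof -
  have g_rest: "g ` (A - B) = A - g ` B"
    using inj_on_image_set_diff[of g A A B] g B(2) by (simp add: bij_betw_def)
  have f_rest: "f ` (A - B) = g ` (A - B)"
    using agree by (rule image_cong[OF refl])
  have "f ` B \<subseteq> g ` B"
  proof
    fix y assume "y \<in> f ` B"
    then obtain b where b: "b \<in> B" "y = f b" by blast
    have "y \<in> A" using f_into B(2) b by blast
    moreover have "y \<notin> f ` (A - B)"
      using f_inj B(2) b unfolding inj_on_def by blast
    ultimately show "y \<in> g ` B" using g_rest f_rest by blast
  qed
  moreover have "card (f ` B) = card (g ` B)"
    using card_image[OF inj_on_subset[OF f_inj B(2)]]
      card_image[OF inj_on_subset[OF bij_betw_imp_inj_on[OF g] B(2)]] by simp
  ultimately have gB: "f ` B = g ` B"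
    using B(1) by (simp add: card_subset_eq)
  have "f ` A = f ` (A - B) \<union> f ` B"
    using B(2) by (metis Diff_partition image_Un sup_commute)
  also have "\<dots> = (A - g ` B) \<union> g ` B"
    using f_rest g_rest gB by simp
  also have "\<dots> = A"
    using g B(2) unfolding bij_betw_def by blast
  finally show ?thesis using f_inj by (simp add: bij_betw_def)
qed

locale flip_iet_partition =
  fixes h :: "real \<Rightarrow> real" and n :: nat and t :: "nat \<Rightarrow> real"
    and c :: "nat \<Rightarrow> real" and flipped :: "nat \<Rightarrow> bool"
  assumes perm_X_h: "perm_X h" and t_0: "t 0 = 0" and t_n: "t n = 1"
    and t_Suc: "\<And>i. i < n \<Longrightarrow> t i < t (Suc i)"
    and h_piece: "\<And>i x. i < n \<Longrightarrow> t i < x \<Longrightarrow> x < t (Suc i) \<Longrightarrow>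
        h x = (if flipped i then - x + c i else x + c i)"
begin

lemma t_mono:
  assumes "i \<le> j" "j \<le> n" shows "t i \<le> t j"
  using assms
proof (induction j rule: dec_induct)
  case (step m)
  then show ?case using t_Suc[of m] by force
qed simp

lemma t_bounds: "i \<le> n \<Longrightarrow> 0 \<le> t i \<and> t i \<le> 1"
  using t_mono[of 0 i] t_mono[of i n] t_0 t_n by simp

lemma piece_exists:
  assumes "x \<in> X" shows "\<exists>i<n. t i \<le> x \<and> x < t (Suc i)"
proof -
  define S where "S = {i. i \<le> n \<and> t i \<le> x}"
  have "finite S" "0 \<in> S" using assms t_0 unfolding S_def X_def by auto
  define i where "i = Max S"
  have "i \<in> S" using Max_in[OF \<open>finite S\<close>] \<open>0 \<in> S\<close> unfolding i_def by blast
  moreover have "Suc i \<notin> S" using Max_ge[OF \<open>finite S\<close>, of "Suc i"] unfolding i_def by auto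
  moreover have "i \<noteq> n" using \<open>i \<in> S\<close> assms t_n unfolding S_def X_def by auto
  ultimately show ?thesis unfolding S_def by (intro exI[of _ i]) auto
qed

lemma piece_unique:
  assumes "i < n" "j < n" "t i \<le> x" "x < t (Suc i)" "t j \<le> x" "x < t (Suc j)"
  shows "i = j"
  using t_mono[of "Suc i" j] t_mono[of "Suc j" i] assms
  by (cases i j rule: linorder_cases) auto

definition open_piece :: "nat \<Rightarrow> real set" where
  "open_piece i = {t i<..<t (Suc i)}"

definition shift :: "nat \<Rightarrow> real" where
  "shift i = (if flipped i then c i - t i - t (Suc i) else c i)"

definition open_image :: "nat \<Rightarrow> real set" where
  "open_image i = {t i + shift i<..<t (Suc i) + shift i}"

definition orient :: "nat \<Rightarrow> real \<Rightarrow> real" where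
  "orient i x = (if flipped i then t i + t (Suc i) - x else x)"

lemma open_piece_disjoint:
  assumes "i < n" "j < n" "i \<noteq> j" shows "open_piece j \<inter> open_piece i = {}"
proof -
  have False if "x \<in> open_piece j" "x \<in> open_piece i" for x
    using piece_unique[of i j x] assms that unfolding open_piece_def by auto
  then show ?thesis by blast
qed

lemma open_piece_subset_X: "i < n \<Longrightarrow> open_piece i \<subseteq> X"
  using t_bounds[of i] t_bounds[of "Suc i"] unfolding open_piece_def X_def by auto

lemma in_open_piece_if_not_breakpoint:
  assumes "x \<in> X" "x \<notin> t ` {..<n}" shows "\<exists>i<n. x \<in> open_piece i"
proof -
  obtain i where "i < n" "t i \<le> x" "x < t (Suc i)" using piece_exists[OF assms(1)] by blast
  moreover have "x \<noteq> t i" using assms(2) \<open>i < n\<close> by blast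
  ultimately show ?thesis unfolding open_piece_def by auto
qed

lemma orient_open_piece: "x \<in> open_piece i \<Longrightarrow> orient i x \<in> open_piece i"
  unfolding orient_def open_piece_def by auto

lemma orient_orient [simp]: "orient i (orient i x) = x"
  unfolding orient_def by auto

lemma h_open_piece: "i < n \<Longrightarrow> x \<in> open_piece i \<Longrightarrow> h x = orient i x + shift i"
  using h_piece[of i x] unfolding open_piece_def orient_def shift_def by auto

lemma h_image_open_piece: "i < n \<Longrightarrow> h ` open_piece i = open_image i"
proof (intro set_eqI iffI)
  fix y assume i: "i < n" and "y \<in> h ` open_piece i"
  then obtain x where "x \<in> open_piece i" "y = orient i x + shift i"
    using h_open_piece by blast
  then show "y \<in> open_image i"
    using orient_open_piece unfolding open_piece_def open_image_def by fastforce
next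
  fix y assume i: "i < n" and "y \<in> open_image i"
  then have "orient i (y - shift i) \<in> open_piece i"
    using orient_open_piece unfolding open_piece_def open_image_def by auto
  moreover have "h (orient i (y - shift i)) = y" using h_open_piece[OF i] calculation by simp
  ultimately show "y \<in> h ` open_piece i" by (metis image_eqI)
qed

lemma h_bij: "bij_betw h X X"
  using perm_X_h unfolding perm_X_def by simp

lemma open_image_disjoint:
  assumes "i < n" "j < n" "i \<noteq> j" shows "open_image j \<inter> open_image i = {}"
proof -
  have "open_image j \<inter> open_image i = h ` (open_piece j \<inter> open_piece i)"
    using inj_on_image_Int[OF bij_betw_imp_inj_on[OF h_bij] open_piece_subset_X
        open_piece_subset_X] assms
    by (simp add: h_image_open_piece)
  then show ?thesis using open_piece_disjoint[OF assms] by simp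
qed

lemma shift_bounds:
  assumes "i < n" shows "0 \<le> t i + shift i" "t (Suc i) + shift i \<le> 1"
proof -
  have "open_image i \<subseteq> X"
    using h_image_open_piece[OF assms] bij_betw_imp_surj_on[OF h_bij]
      open_piece_subset_X[OF assms]
    by (metis image_mono)
  then have "open_image i \<subseteq> {0..1}" unfolding X_def by auto
  then show "0 \<le> t i + shift i" "t (Suc i) + shift i \<le> 1"
    using t_Suc[OF assms]
    unfolding open_image_def greaterThanLessThan_subseteq_atLeastAtMost_iff by auto
qed

definition piece_index :: "real \<Rightarrow> nat" where
  "piece_index x = (THE i. i < n \<and> t i \<le> x \<and> x < t (Suc i))"

(* f moves each piece [t i, t (Suc i)[ rigidly to where h puts it, undoing reflections. *)
definition f :: "real \<Rightarrow> real" where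
  "f x = (if x \<in> X then x + shift (piece_index x) else x)"

lemma f_piece: "i < n \<Longrightarrow> t i \<le> x \<Longrightarrow> x < t (Suc i) \<Longrightarrow> f x = x + shift i"
proof -
  assume piece: "i < n" "t i \<le> x" "x < t (Suc i)"
  have "piece_index x = i"
    unfolding piece_index_def
  proof (rule the_equality)
    fix j assume "j < n \<and> t j \<le> x \<and> x < t (Suc j)"
    then show "j = i" using piece_unique piece by blast
  qed (use piece in simp)
  moreover have "x \<in> X" using piece t_bounds[of i] t_bounds[of "Suc i"] unfolding X_def by auto
  ultimately show ?thesis unfolding f_def by simp
qed

lemma f_outside: "x \<notin> X \<Longrightarrow> f x = x"
  unfolding f_def by simp

lemma f_into: "f ` X \<subseteq> X"
proof
  fix y assume "y \<in> f ` X"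
  then obtain x i where "y = f x" "i < n" "t i \<le> x" "x < t (Suc i)"
    using piece_exists by blast
  then show "y \<in> X" using f_piece shift_bounds[of i] unfolding X_def by auto
qed

lemma f_inj: "inj_on f X"
proof (rule inj_onI)
  fix x z assume "x \<in> X" "z \<in> X" and fxz: "f x = f z"
  obtain i where i: "i < n" "t i \<le> x" "x < t (Suc i)"
    using piece_exists[OF \<open>x \<in> X\<close>] by blast
  obtain j where j: "j < n" "t j \<le> z" "z < t (Suc j)"
    using piece_exists[OF \<open>z \<in> X\<close>] by blast
  show "x = z"
  proof (cases "i = j")
    case True
    then show ?thesis using fxz f_piece[OF i] f_piece[OF j] by simp
  next
    case False
    have "{t j + shift j..<t (Suc j) + shift j} \<inter> {t i + shift i..<t (Suc i) + shift i} = {}"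
      using Ico_disjoint_if_Ioo_disjoint open_image_disjoint[OF i(1) j(1) False]
      unfolding open_image_def .
    moreover have "f x \<in> {t i + shift i..<t (Suc i) + shift i}"
      and "f z \<in> {t j + shift j..<t (Suc j) + shift j}"
      using f_piece[OF i] f_piece[OF j] i j by auto
    ultimately show ?thesis using fxz by (metis disjoint_iff)
  qed
qed

definition flip_pieces :: "real \<Rightarrow> real" where
  "flip_pieces = flip_list (filter flipped [0..<n]) t (\<lambda>i. t (Suc i))"

definition flip_images :: "real \<Rightarrow> real" where
  "flip_images =
     flip_list (filter flipped [0..<n]) (\<lambda>i. t i + shift i) (\<lambda>i. t (Suc i) + shift i)"

lemma flip_product_flip_pieces: "flip_product flip_pieces"
  unfolding flip_pieces_def using t_bounds t_Suc by (intro flip_product_flip_list) auto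

lemma flip_product_flip_images: "flip_product flip_images"
  unfolding flip_images_def using shift_bounds t_Suc by (intro flip_product_flip_list) auto

lemma flip_pieces_open_piece:
  "i < n \<Longrightarrow> x \<in> open_piece i \<Longrightarrow> flip_pieces x = orient i x"
  unfolding flip_pieces_def orient_def
  by (subst flip_list_apply[where i = i])
     (use open_piece_disjoint in \<open>auto simp: open_piece_def\<close>)

lemma flip_images_h_open_piece:
  "i < n \<Longrightarrow> x \<in> open_piece i \<Longrightarrow> flip_images (h x) = f x"
proof -
  assume i: "i < n" and x: "x \<in> open_piece i"
  have "h x \<in> open_image i" using h_image_open_piece[OF i] x by blast
  then have "flip_images (h x) =
      (if flipped i then (t i + shift i) + (t (Suc i) + shift i) - h x else h x)"
    unfolding flip_images_def
    by (subst flip_list_apply[where i = i])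
       (use i open_image_disjoint in \<open>auto simp: open_image_def[symmetric]\<close>)
  also have "\<dots> = x + shift i"
    using h_open_piece[OF i x] unfolding orient_def by simp
  also have "\<dots> = f x"
    using f_piece[OF i] x unfolding open_piece_def by simp
  finally show ?thesis .
qed

lemma h_flip_pieces_open_piece:
  "i < n \<Longrightarrow> x \<in> open_piece i \<Longrightarrow> h (flip_pieces x) = f x"
  using flip_pieces_open_piece h_open_piece orient_open_piece f_piece
  unfolding open_piece_def by auto

lemma flip_images_h_agrees_f: "{x. flip_images (h x) \<noteq> f x} \<subseteq> t ` {..<n}"
proof
  fix x assume x: "x \<in> {x. flip_images (h x) \<noteq> f x}"
  show "x \<in> t ` {..<n}"
  proof (rule ccontr)
    assume "x \<notin> t ` {..<n}"
    moreover have "x \<in> X"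
      using x perm_X_outside[OF perm_X_h] f_outside
        perm_X_outside[OF flip_product_perm_X[OF flip_product_flip_images]] by force
    ultimately obtain i where "i < n" "x \<in> open_piece i"
      using in_open_piece_if_not_breakpoint by blast
    with x show False using flip_images_h_open_piece by simp
  qed
qed

lemma h_flip_pieces_agrees_f: "{x. h (flip_pieces x) \<noteq> f x} \<subseteq> t ` {..<n}"
proof
  fix x assume x: "x \<in> {x. h (flip_pieces x) \<noteq> f x}"
  show "x \<in> t ` {..<n}"
  proof (rule ccontr)
    assume "x \<notin> t ` {..<n}"
    moreover have "x \<in> X"
      using x perm_X_outside[OF perm_X_h] f_outside
        perm_X_outside[OF flip_product_perm_X[OF flip_product_flip_pieces]] by force
    ultimately obtain i where "i < n" "x \<in> open_piece i"
      using in_open_piece_if_not_breakpoint by blast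
    with x show False using h_flip_pieces_open_piece by simp
  qed
qed

lemma breakpoints_subset_X: "t ` {..<n} \<subseteq> X"
proof
  fix y assume "y \<in> t ` {..<n}"
  then obtain i where "i < n" "y = t i" by blast
  then show "y \<in> X" using t_bounds[of i] t_bounds[of "Suc i"] t_Suc[of i] unfolding X_def by auto
qed

lemma perm_X_f: "perm_X f"
proof -
  have "perm_X (flip_images \<circ> h)"
    using perm_X_comp flip_product_perm_X[OF flip_product_flip_images] perm_X_h by blast
  then have "bij_betw (flip_images \<circ> h) X X" unfolding perm_X_def by blast
  moreover have "f x = (flip_images \<circ> h) x" if "x \<in> X - t ` {..<n}" for x
  proof -
    have "x \<notin> {x. flip_images (h x) \<noteq> f x}" using that flip_images_h_agrees_f by blast
    then show ?thesis by simp
  qed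
  ultimately have "bij_betw f X X"
    using bij_betw_if_finite_modification f_inj f_into breakpoints_subset_X by blast
  then show ?thesis using f_outside unfolding perm_X_def by blast
qed

lemma f_right_continuous: "x \<in> X \<Longrightarrow> continuous (at_right x) f"
proof -
  assume "x \<in> X"
  then obtain i where i: "i < n" "t i \<le> x" "x < t (Suc i)" using piece_exists by blast
  have "eventually (\<lambda>z. z + shift i = f z) (at_right x)"
    unfolding eventually_at_right_field using i f_piece
    by (intro exI[of _ "t (Suc i)"]) auto
  moreover have "((\<lambda>z. z + shift i) \<longlongrightarrow> f x) (at_right x)"
    using f_piece[OF i] by (auto intro!: tendsto_eq_intros)
  ultimately show ?thesis
    unfolding continuous_within by (rule tendsto_cong[THEN iffD1])
qed

lemma IET_hat_plus_rc_f: "IET_hat_plus_rc f"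
proof -
  have "pw_isom False f"
    unfolding pw_isom_def
  proof (intro exI[of _ n] exI[of _ t] conjI t_0 t_n allI impI t_Suc)
    fix i assume "i < n"
    then show "\<exists>c. (\<forall>x. t i < x \<and> x < t (Suc i) \<longrightarrow> f x = x + c) \<or>
        (False \<and> (\<forall>x. t i < x \<and> x < t (Suc i) \<longrightarrow> f x = - x + c))"
      using f_piece by (intro exI[of _ "shift i"]) auto
  qed
  then show ?thesis
    unfolding IET_hat_plus_rc_def IET_hat_plus_def using perm_X_f f_right_continuous by blast
qed

lemma decomposition:
  "\<exists>f g r s \<sigma> \<tau>. IET_hat_plus_rc f \<and> IET_hat_plus_rc g \<and>
     flip_product r \<and> flip_product s \<and> fin_supp_perm_X \<sigma> \<and> fin_supp_perm_X \<tau> \<and>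
     h = r \<circ> \<sigma> \<circ> f \<and> h = g \<circ> \<tau> \<circ> s"
proof (intro exI conjI)
  have bij: "bij f" "bij flip_images" "bij flip_pieces"
    using perm_X_f flip_product_flip_images flip_product_flip_pieces
    by (auto intro: perm_X_bij flip_product_perm_X)
  have perm: "perm_X (flip_images \<circ> h)" "perm_X (h \<circ> flip_pieces)"
    using perm_X_h flip_product_flip_images flip_product_flip_pieces
    by (auto intro: perm_X_comp flip_product_perm_X)
  show "h = inv flip_images \<circ> (flip_images \<circ> h \<circ> inv f) \<circ> f"
    using bij by (simp add: fun_eq_iff bij_is_inj)
  show "h = f \<circ> (inv f \<circ> (h \<circ> flip_pieces)) \<circ> inv flip_pieces"
    using bij by (simp add: fun_eq_iff bij_is_surj surj_f_inv_f)
  have "finite {x. (flip_images \<circ> h) x \<noteq> f x}"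
    using flip_images_h_agrees_f by (simp add: finite_subset)
  then have "finite {y. (flip_images \<circ> h \<circ> inv f) y \<noteq> y}"
    unfolding disagreement_comp_inv[OF bij(1)] by simp
  then show "fin_supp_perm_X (flip_images \<circ> h \<circ> inv f)"
    using fin_supp_perm_XI perm_X_comp[OF perm(1) perm_X_inv[OF perm_X_f]] by blast
  have "finite {x. (h \<circ> flip_pieces) x \<noteq> f x}"
    using h_flip_pieces_agrees_f by (simp add: finite_subset)
  then have "finite {x. (inv f \<circ> (h \<circ> flip_pieces)) x \<noteq> x}"
    unfolding disagreement_inv_comp[OF bij(1)] .
  then show "fin_supp_perm_X (inv f \<circ> (h \<circ> flip_pieces))"
    using fin_supp_perm_XI perm_X_comp[OF perm_X_inv[OF perm_X_f] perm(2)] by blast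
qed (auto intro: IET_hat_plus_rc_f flip_product_inv flip_product_flip_images flip_product_flip_pieces)

end

theorem proposition2p4:
  assumes "IET_hat_flip h"
  shows "\<exists>f g r s \<sigma> \<tau>. IET_hat_plus_rc f \<and> IET_hat_plus_rc g \<and>
           flip_product r \<and> flip_product s \<and> fin_supp_perm_X \<sigma> \<and> fin_supp_perm_X \<tau> \<and>
           h = r \<circ> \<sigma> \<circ> f \<and> h = g \<circ> \<tau> \<circ> s"
proof -
  obtain n t where t: "t 0 = 0" "t n = 1" "\<forall>i<n. t i < t (Suc i)"
    and "\<forall>i<n. \<exists>c. (\<forall>x. t i < x \<and> x < t (Suc i) \<longrightarrow> h x = x + c) \<or>
                   (True \<and> (\<forall>x. t i < x \<and> x < t (Suc i) \<longrightarrow> h x = - x + c))"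
    using assms unfolding IET_hat_flip_def pw_isom_def by blast
  then obtain c where c: "\<forall>i<n. (\<forall>x. t i < x \<and> x < t (Suc i) \<longrightarrow> h x = x + c i) \<or>
                   (\<forall>x. t i < x \<and> x < t (Suc i) \<longrightarrow> h x = - x + c i)"
    by metis
  define flipped where "flipped i \<longleftrightarrow> \<not> (\<forall>x. t i < x \<and> x < t (Suc i) \<longrightarrow> h x = x + c i)" for i
  interpret flip_iet_partition h n t c flipped
  proof
    fix i x assume "i < n" "t i < x" "x < t (Suc i)"
    then show "h x = (if flipped i then - x + c i else x + c i)"
      using c unfolding flipped_def by auto
  qed (use assms t in \<open>auto simp: IET_hat_flip_def\<close>)
  show ?thesis by (rule decomposition)
qed

end
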